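(* Let $q\ge2$ be an integer and $p$ a prime not dividing $q$. For every finite field $F$ of characteristic $p$ and every positive integer $d$, every $d$-dimensional VLNC solution over $F$ of the Char-$q$-$s$ network has $s$-coefficient matrix $A_1=0$ on $e_1$.
   Context: Vector linear network coding: each source $v$ generates $x_v\in F^d$; an edge out of a source $v$ carries $Ax_v$ for a $d\times d$ matrix $A$ over $F$; an edge out of an intermediate node carries $\sum A_{e',e}y_{e'}$ over the edges $e'$ entering that node; a terminal computes vectors $\sum B_ey_e$ over its incoming edges; a $d$-dimensional VLNC solution over $F$ is such a code with which every terminal computes each demanded message for all message choices. The Char-$q$-$s$ network (integer $q\ge2$): sources $s,x_1,\dots,x_{q+2}$; intermediate nodes $m_1,\dots,m_{q+3},n_1,\dots,n_{q+3}$; terminals $r_1,\dots,r_{q+3}$; edges: $(x_1,m_i)$ for $1\le i\le q+1$; $(s,m_1)$ and $(s,m_i)$ for $4\le i\le q+3$; $(x_i,m_j)$ for $2\le i,j\le q+2$, $i\ne j$; $(x_i,m_{q+3})$ for $1\le i\le q+2$; $e_i=(m_i,n_i)$ for $1\le i\le q+3$; $(n_i,r_i)$ for $1\le i\le q+2$; $(n_{q+3},r_i)$ and $(n_i,r_{q+3})$ for $1\le i\le q+2$; $(x_i,r_1)$ for $2\le i\le q+1$; $(x_1,r_{q+2})$; $(s,r_2)$; $(s,r_3)$. Demands: $r_1$ demands $x_{q+2}$; $r_i$ demands $x_i$ for $2\le i\le q+2$; $r_{q+3}$ demands $x_1$; no terminal demands $s$. In any $d$-dimensional VLNC over $F$ the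 vector on $e_1$ has the form $y_{e_1}=M_1x_1+A_1s$ with $d\times d$ matrices $M_1,A_1$; $A_1$ is called the $s$-coefficient matrix on $e_1$. *)

theory Defs
  imports "HOL-Analysis.Analysis"
begin

datatype node = S | X nat | M nat | N nat | R nat

type_synonym edge = "node \<times> node"

definition sources :: "nat \<Rightarrow> node set" where
  "sources q = {S} \<union> {X i | i. 1 \<le> i \<and> i \<le> q + 2}"

definition intermediates :: "nat \<Rightarrow> node set" where
  "intermediates q = {M i | i. 1 \<le> i \<and> i \<le> q + 3} \<union> {N i | i. 1 \<le> i \<and> i \<le> q + 3}"

definition terminals :: "nat \<Rightarrow> node set" where
  "terminals q = {R i | i. 1 \<le> i \<and> i \<le> q + 3}"

definition edges :: "nat \<Rightarrow> edge set" where
  "edges q =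
     {(X 1, M i) | i. 1 \<le> i \<and> i \<le> q + 1}
   \<union> {(S, M 1)} \<union> {(S, M i) | i. 4 \<le> i \<and> i \<le> q + 3}
   \<union> {(X i, M j) | i j. 2 \<le> i \<and> i \<le> q + 2 \<and> 2 \<le> j \<and> j \<le> q + 2 \<and> i \<noteq> j}
   \<union> {(X i, M (q + 3)) | i. 1 \<le> i \<and> i \<le> q + 2}
   \<union> {(M i, N i) | i. 1 \<le> i \<and> i \<le> q + 3}
   \<union> {(N i, R i) | i. 1 \<le> i \<and> i \<le> q + 2}
   \<union> {(N (q + 3), R i) | i. 1 \<le> i \<and> i \<le> q + 2}
   \<union> {(N i, R (q + 3)) | i. 1 \<le> i \<and> i \<le> q + 2}
   \<union> {(X i, R 1) | i. 2 \<le> i \<and> i \<le> q + 1}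
   \<union> {(X 1, R (q + 2)), (S, R 2), (S, R 3)}"

definition demands :: "nat \<Rightarrow> (node \<times> node) set" where
  "demands q = {(R 1, X (q + 2))} \<union> {(R i, X i) | i. 2 \<le> i \<and> i \<le> q + 2}
              \<union> {(R (q + 3), X 1)}"

definition in_edges :: "nat \<Rightarrow> node \<Rightarrow> edge set" where
  "in_edges q v = {e \<in> edges q. snd e = v}"

text \<open>A d-dimensional VLNC over the field 'a is given by
  K e   : the d x d matrix on an edge e out of a source (edge carries K e *v x_source),
  A e' e: the local coding matrix from edge e' into an intermediate node to an edge e out of it,
  B t v e: the decoding matrix of terminal t for demanded message v on incoming edge e.
  The dimension d is CARD('n).  A message choice is a map x from nodes to F^d
  (only values at sources matter).  y is the family of edge vectors; it is consistent
  with the code and x if it obeys the coding equations (the network is acyclic, so the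
  consistent y exists and is unique).\<close>

definition consistent ::
  "nat \<Rightarrow> (edge \<Rightarrow> 'a::comm_ring_1^'n^'n) \<Rightarrow> (edge \<Rightarrow> edge \<Rightarrow> 'a^'n^'n)
   \<Rightarrow> (node \<Rightarrow> 'a^'n) \<Rightarrow> (edge \<Rightarrow> 'a^'n) \<Rightarrow> bool" where
  "consistent q K A x y \<longleftrightarrow>
     (\<forall>e \<in> edges q.
        (fst e \<in> sources q \<longrightarrow> y e = K e *v x (fst e)) \<and>
        (fst e \<in> intermediates q \<longrightarrow> y e = (\<Sum>e' \<in> in_edges q (fst e). A e' e *v y e')))"

definition is_VLNC_solution ::
  "nat \<Rightarrow> (edge \<Rightarrow> 'a::comm_ring_1^'n^'n) \<Rightarrow> (edge \<Rightarrow> edge \<Rightarrow> 'a^'n^'n)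
   \<Rightarrow> (node \<Rightarrow> node \<Rightarrow> edge \<Rightarrow> 'a^'n^'n) \<Rightarrow> bool" where
  "is_VLNC_solution q K A B \<longleftrightarrow>
     (\<forall>x y. consistent q K A x y \<longrightarrow>
        (\<forall>(t, v) \<in> demands q. (\<Sum>e \<in> in_edges q t. B t v e *v y e) = x v))"

text \<open>The vector on e_1 = (m_1, n_1) is
  y_{e_1} = A_{(x_1,m_1),e_1} K_{(x_1,m_1)} x_1 + A_{(s,m_1),e_1} K_{(s,m_1)} s,
  so the s-coefficient matrix on e_1 is the following product.\<close>

definition s_coeff_e1 ::
  "(edge \<Rightarrow> 'a::comm_ring_1^'n^'n) \<Rightarrow> (edge \<Rightarrow> edge \<Rightarrow> 'a^'n^'n) \<Rightarrow> 'a^'n^'n" where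
  "s_coeff_e1 K A = A (S, M 1) (M 1, N 1) ** K (S, M 1)"

end

theory Submission
  imports Defs
begin

text \<open>
  Let \<open>y\<^sub>j\<close> denote the vector on \<open>e\<^sub>j\<close>. Terminal \<open>r\<^sub>j\<close> (\<open>2 \<le> j \<le> q+2\<close>)
  decodes \<open>x\<^sub>j = U\<^sub>j y\<^sub>j + V\<^sub>j y\<^sub>q\<^sub>+\<^sub>3\<close> (plus terms in \<open>s\<close>, \<open>x\<^sub>1\<close> for a few \<open>j\<close>), and
  \<open>x\<^sub>j\<close> does not enter \<open>m\<^sub>j\<close>; hence \<open>V\<^sub>j\<close> and \<open>U\<^sub>j\<close> are invertible, \<open>y\<^sub>q\<^sub>+\<^sub>3\<close> can be
  made arbitrary by \<open>x\<^sub>j\<close> alone, and \<open>y\<^sub>i\<close> is determined by \<open>x\<^sub>i\<close> and \<open>y\<^sub>q\<^sub>+\<^sub>3\<close>.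
  Terminal \<open>r\<^sub>q\<^sub>+\<^sub>3\<close> decodes \<open>x\<^sub>1 = \<Sum> W\<^sub>i y\<^sub>i\<close>. Sending a single message \<open>x\<^sub>k\<close>
  (\<open>2 \<le> k \<le> q+2\<close>) that produces a fixed \<open>y\<^sub>q\<^sub>+\<^sub>3\<close>, the term \<open>W\<^sub>i y\<^sub>i\<close> vanishes
  for \<open>i = k\<close> and is independent of \<open>k\<close> otherwise, while the \<open>q+1\<close> terms sum to
  \<open>x\<^sub>1 = 0\<close>. So every \<open>q\<close> of \<open>q+1\<close> numbers sum to zero, which forces them to vanish
  when \<open>q \<noteq> 0\<close> in the field. Consequently \<open>x\<^sub>1 = W\<^sub>1 y\<^sub>1\<close>, so \<open>W\<^sub>1\<close> is invertible,
  and the message \<open>s\<close>, which \<open>r\<^sub>q\<^sub>+\<^sub>3\<close> must ignore, cannot reach \<open>y\<^sub>1\<close>.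
\<close>

lemma matrix_surj_imp_inj:
  fixes X :: "'a::field^'n^'n"
  shows "surj ((*v) X) \<Longrightarrow> inj ((*v) X)"
  by (simp add: vec.linear_surj_imp_inj)

lemma eq_0_if_sums_but_one_eq_0:
  fixes h :: "'i \<Rightarrow> 'a::field^'n"
  assumes fin: "finite I" and card: "card I = Suc q" and q_nonzero: "of_nat q \<noteq> (0::'a)"
    and sums: "\<And>l. l \<in> I \<Longrightarrow> (\<Sum>i\<in>I-{l}. h i) = 0"
    and k: "k \<in> I"
  shows "h k = 0"
proof -
  define H where "H = (\<Sum>i\<in>I. h i)"
  have h_eq: "h j = H" if "j \<in> I" for j
    using sums[OF that] sum_diff1[OF fin, of h j] that unfolding H_def by simp
  have "0 = (\<Sum>i\<in>I-{k}. h i)" using sums[OF k] by simp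
  also have "\<dots> = (\<Sum>i\<in>I-{k}. H)" using h_eq by simp
  also have "\<dots> = of_nat q * H" using card k fin by simp
  finally have "H = 0" using q_nonzero by (simp add: vec_eq_iff of_nat_index)
  then show ?thesis using h_eq k by simp
qed

lemma eq_0_if_rows_const_off_diag_and_col_sums_eq_0:
  fixes G :: "'i \<Rightarrow> 'i \<Rightarrow> 'a::field^'n"
  assumes fin: "finite I" and card: "card I = Suc q" and q_nonzero: "of_nat q \<noteq> (0::'a)"
    and diag: "\<And>k. k \<in> I \<Longrightarrow> G k k = 0"
    and row: "\<And>i k l. \<lbrakk>i \<in> I; k \<in> I; l \<in> I; k \<noteq> i; l \<noteq> i\<rbrakk> \<Longrightarrow> G i k = G i l"
    and col: "\<And>k. k \<in> I \<Longrightarrow> (\<Sum>i\<in>I. G i k) = 0"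
    and i: "i \<in> I" and k: "k \<in> I"
  shows "G i k = 0"
proof (cases "k = i")
  case False
  define h where "h i' = G i' (SOME l. l \<in> I \<and> l \<noteq> i')" for i'
  have G_eq_h: "G i' l = h i'" if "i' \<in> I" "l \<in> I" "l \<noteq> i'" for i' l
  proof -
    have "\<exists>l. l \<in> I \<and> l \<noteq> i'" using that by blast
    then have "(SOME l. l \<in> I \<and> l \<noteq> i') \<in> I \<and> (SOME l. l \<in> I \<and> l \<noteq> i') \<noteq> i'"
      by (rule someI_ex)
    then show ?thesis using row that unfolding h_def by metis
  qed
  have "(\<Sum>i'\<in>I-{l}. h i') = 0" if l: "l \<in> I" for l
  proof -
    have "0 = (\<Sum>i'\<in>I. G i' l)" using col[OF l] by simp
    also have "\<dots> = G l l + (\<Sum>i'\<in>I-{l}. G i' l)" using fin l by (rule sum.remove)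
    also have "\<dots> = (\<Sum>i'\<in>I-{l}. h i')" using diag[OF l] G_eq_h l by (auto intro!: sum.cong)
    finally show ?thesis by simp
  qed
  then have "h i = 0" by (rule eq_0_if_sums_but_one_eq_0[OF fin card q_nonzero _ i])
  then show ?thesis using G_eq_h i k False by simp
qed (use diag i in simp)

lemma source_if_edge_into_M: "(a, M j) \<in> edges q \<Longrightarrow> a \<in> sources q"
  by (auto simp: edges_def sources_def)

lemma S_in_sources: "S \<in> sources q"
  and X1_in_sources: "X 1 \<in> sources q"
  and M_notin_sources: "M j \<notin> sources q"
  and N_notin_sources: "N j \<notin> sources q"
  by (auto simp: sources_def)

lemma in_edges_N: "1 \<le> j \<Longrightarrow> j \<le> q + 3 \<Longrightarrow> in_edges q (N j) = {(M j, N j)}"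
  by (auto simp: in_edges_def edges_def)

lemma in_edges_M1: "in_edges q (M 1) = {(X 1, M 1), (S, M 1)}"
  by (auto simp: in_edges_def edges_def)

lemma in_edges_R:
  "2 \<le> q \<Longrightarrow> 2 \<le> j \<Longrightarrow> j \<le> q + 2 \<Longrightarrow> in_edges q (R j) =
     {(N j, R j), (N (q + 3), R j)} \<union> (if j = 2 \<or> j = 3 then {(S, R j)} else {})
     \<union> (if j = q + 2 then {(X 1, R j)} else {})"
  by (auto simp: in_edges_def edges_def)

lemma in_edges_R_last: "2 \<le> q \<Longrightarrow> in_edges q (R (q + 3)) = (\<lambda>i. (N i, R (q + 3))) ` {1..q + 2}"
  by (auto simp: in_edges_def edges_def)

lemma non_edges:
  "2 \<le> j \<Longrightarrow> (X j, M j) \<notin> edges q"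
  "2 \<le> j \<Longrightarrow> (X j, M 1) \<notin> edges q"
  "(S, M 2) \<notin> edges q" "(S, M 3) \<notin> edges q" "(X 1, M (q + 2)) \<notin> edges q"
  by (auto simp: edges_def)

lemma demands_R: "2 \<le> j \<Longrightarrow> j \<le> q + 2 \<Longrightarrow> (R j, X j) \<in> demands q"
  and demands_R_last: "(R (q + 3), X 1) \<in> demands q"
  by (auto simp: demands_def)

definition msg_at :: "node \<Rightarrow> 'a::zero \<Rightarrow> node \<Rightarrow> 'a" where
  "msg_at v b = (\<lambda>u. if u = v then b else 0)"

definition M_out :: "nat \<Rightarrow> (edge \<Rightarrow> 'a::comm_ring_1^'n^'n) \<Rightarrow> (edge \<Rightarrow> edge \<Rightarrow> 'a^'n^'n)
    \<Rightarrow> nat \<Rightarrow> (node \<Rightarrow> 'a^'n) \<Rightarrow> edge \<Rightarrow> 'a^'n" where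
  "M_out q K A j x e = (\<Sum>e'\<in>in_edges q (M j). A e' e *v (K e' *v x (fst e')))"

abbreviation e_vector :: "nat \<Rightarrow> (edge \<Rightarrow> 'a::comm_ring_1^'n^'n) \<Rightarrow> (edge \<Rightarrow> edge \<Rightarrow> 'a^'n^'n)
    \<Rightarrow> nat \<Rightarrow> (node \<Rightarrow> 'a^'n) \<Rightarrow> 'a^'n" where
  "e_vector q K A j x \<equiv> M_out q K A j x (M j, N j)"

text \<open>Every edge into an \<open>m\<^sub>j\<close> leaves a source, so the network has depth three and the
  consistent edge vectors can be written down directly.\<close>

definition edge_vectors :: "nat \<Rightarrow> (edge \<Rightarrow> 'a::comm_ring_1^'n^'n) \<Rightarrow> (edge \<Rightarrow> edge \<Rightarrow> 'a^'n^'n)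
    \<Rightarrow> (node \<Rightarrow> 'a^'n) \<Rightarrow> edge \<Rightarrow> 'a^'n" where
  "edge_vectors q K A x e =
     (if fst e \<in> sources q then K e *v x (fst e)
      else case fst e of
        M j \<Rightarrow> M_out q K A j x e
      | N j \<Rightarrow> A (M j, N j) e *v e_vector q K A j x
      | _ \<Rightarrow> 0)"

lemma edge_vectors_source: "a \<in> sources q \<Longrightarrow> edge_vectors q K A x (a, t) = K (a, t) *v x a"
  by (simp add: edge_vectors_def)

lemma edge_vectors_N: "edge_vectors q K A x (N j, t) = A (M j, N j) (N j, t) *v e_vector q K A j x"
  using N_notin_sources by (simp add: edge_vectors_def)

lemma consistent_edge_vectors: "consistent q K A x (edge_vectors q K A x)"
  unfolding consistent_def
proof (intro ballI conjI impI)
  fix e :: edge assume "fst e \<in> sources q"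
  then show "edge_vectors q K A x e = K e *v x (fst e)" by (simp add: edge_vectors_def)
next
  fix e :: edge assume "fst e \<in> intermediates q"
  then consider j where "fst e = M j" | j where "fst e = N j" "1 \<le> j" "j \<le> q + 3"
    unfolding intermediates_def by blast
  then show "edge_vectors q K A x e = (\<Sum>e'\<in>in_edges q (fst e). A e' e *v edge_vectors q K A x e')"
  proof cases
    case (1 j)
    have "edge_vectors q K A x e' = K e' *v x (fst e')" if "e' \<in> in_edges q (M j)" for e'
      using that source_if_edge_into_M[of "fst e'" j q]
      by (cases e') (auto simp: in_edges_def edge_vectors_def)
    then show ?thesis using 1 M_notin_sources
      by (auto simp: edge_vectors_def M_out_def intro!: sum.cong)
  next
    case (2 j)
    then show ?thesis
      using M_notin_sources N_notin_sources by (simp add: in_edges_N edge_vectors_def M_out_def)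
  qed
qed

lemma e_vector_cong:
  assumes "\<And>a. (a, M j) \<in> edges q \<Longrightarrow> x a = x' a"
  shows "e_vector q K A j x = e_vector q K A j x'"
  unfolding M_out_def using assms by (auto simp: in_edges_def intro!: sum.cong)

lemma e_vector_eq_0:
  assumes "\<And>a. (a, M j) \<in> edges q \<Longrightarrow> x a = 0"
  shows "e_vector q K A j x = 0"
proof -
  have "e_vector q K A j x = e_vector q K A j (\<lambda>_. 0)"
    using assms by (rule e_vector_cong)
  then show ?thesis by (simp add: M_out_def)
qed

locale char_q_s_solution =
  fixes q :: nat
    and K :: "edge \<Rightarrow> 'a::field^'n^'n"
    and A :: "edge \<Rightarrow> edge \<Rightarrow> 'a^'n^'n"
    and B :: "node \<Rightarrow> node \<Rightarrow> edge \<Rightarrow> 'a^'n^'n"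
  assumes two_le_q: "2 \<le> q"
    and solution: "is_VLNC_solution q K A B"
begin

abbreviation y :: "nat \<Rightarrow> (node \<Rightarrow> 'a^'n) \<Rightarrow> 'a^'n" where
  "y j x \<equiv> e_vector q K A j x"

text \<open>The decoding matrices composed with the last coding step: \<open>r\<^sub>j\<close> reads
  \<open>U j *v y j x + V j *v y (q + 3) x\<close> off \<open>n\<^sub>j\<close> and \<open>n\<^sub>q\<^sub>+\<^sub>3\<close>, and \<open>r\<^sub>q\<^sub>+\<^sub>3\<close> reads
  \<open>W i *v y i x\<close> off \<open>n\<^sub>i\<close>.\<close>

definition U :: "nat \<Rightarrow> 'a^'n^'n" where
  "U j = B (R j) (X j) (N j, R j) ** A (M j, N j) (N j, R j)"

definition V :: "nat \<Rightarrow> 'a^'n^'n" where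
  "V j = B (R j) (X j) (N (q + 3), R j) ** A (M (q + 3), N (q + 3)) (N (q + 3), R j)"

definition W :: "nat \<Rightarrow> 'a^'n^'n" where
  "W i = B (R (q + 3)) (X 1) (N i, R (q + 3)) ** A (M i, N i) (N i, R (q + 3))"

lemma decode:
  "(t, v) \<in> demands q \<Longrightarrow> (\<Sum>e\<in>in_edges q t. B t v e *v edge_vectors q K A x e) = x v"
  using solution consistent_edge_vectors[of q K A x] unfolding is_VLNC_solution_def by blast

lemma decode_R:
  assumes j: "2 \<le> j" "j \<le> q + 2"
    and S_silent: "j = 2 \<or> j = 3 \<Longrightarrow> x S = 0"
    and X1_silent: "j = q + 2 \<Longrightarrow> x (X 1) = 0"
  shows "x (X j) = U j *v y j x + V j *v y (q + 3) x"
proof -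
  have "x (X j) = (\<Sum>e\<in>in_edges q (R j). B (R j) (X j) e *v edge_vectors q K A x e)"
    using decode[OF demands_R[OF j]] by simp
  also have "\<dots> = U j *v y j x + V j *v y (q + 3) x"
    using j two_le_q S_silent X1_silent S_in_sources X1_in_sources
    unfolding in_edges_R[OF two_le_q j]
    by (auto simp: edge_vectors_N edge_vectors_source U_def V_def matrix_vector_mul_assoc)
  finally show ?thesis .
qed

lemma decode_R_last: "x (X 1) = W 1 *v y 1 x + (\<Sum>i = 2..q + 2. W i *v y i x)"
proof -
  have "x (X 1) = (\<Sum>e\<in>in_edges q (R (q + 3)). B (R (q + 3)) (X 1) e *v edge_vectors q K A x e)"
    using decode[OF demands_R_last] by simp
  also have "\<dots> = (\<Sum>i = 1..q + 2. W i *v y i x)"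
    unfolding in_edges_R_last[OF two_le_q]
    by (subst sum.reindex) (auto simp: inj_on_def edge_vectors_N W_def matrix_vector_mul_assoc)
  also have "{1..q + 2} = insert 1 {2..q + 2}" by auto
  finally show ?thesis by simp
qed

lemma e_vector_msg_at_own: "2 \<le> j \<Longrightarrow> y j (msg_at (X j) b) = 0"
  by (rule e_vector_eq_0) (use non_edges(1) in \<open>auto simp: msg_at_def\<close>)

lemma V_e_vector_msg_at_own:
  assumes j: "2 \<le> j" "j \<le> q + 2"
  shows "V j *v y (q + 3) (msg_at (X j) b) = b"
proof -
  have silent: "msg_at (X j) b S = 0" "msg_at (X j) b (X 1) = 0"
    using j by (auto simp: msg_at_def)
  have "msg_at (X j) b (X j) = V j *v y (q + 3) (msg_at (X j) b)"
    using decode_R[OF j silent] e_vector_msg_at_own[OF j(1)] by simp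
  moreover have "msg_at (X j) b (X j) = b" by (simp add: msg_at_def)
  ultimately show ?thesis by metis
qed

lemma inj_V:
  assumes "2 \<le> j" "j \<le> q + 2"
  shows "inj ((*v) (V j))"
  by (rule matrix_surj_imp_inj, rule surjI[of _ "\<lambda>b. y (q + 3) (msg_at (X j) b)"])
    (rule V_e_vector_msg_at_own[OF assms])

lemma e_vector_last_msg_at_surj:
  assumes "2 \<le> j" "j \<le> q + 2"
  shows "\<exists>b. y (q + 3) (msg_at (X j) b) = w"
  using injD[OF inj_V[OF assms] V_e_vector_msg_at_own[OF assms, of "V j *v w"]] by blast

lemma obtain_other_index:
  obtains k where "2 \<le> k" "k \<le> q + 2" "k \<noteq> i"
proof (cases "i = 2")
  case True
  then show ?thesis using two_le_q by (intro that[of 3]) auto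
next
  case False
  then show ?thesis by (intro that[of 2]) auto
qed

lemma inj_U:
  assumes i: "2 \<le> i" "i \<le> q + 2"
  shows "inj ((*v) (U i))"
proof (rule matrix_surj_imp_inj, unfold surj_def, intro allI)
  fix w
  obtain k where k: "2 \<le> k" "k \<le> q + 2" "k \<noteq> i" by (rule obtain_other_index)
  obtain b where b: "y (q + 3) (msg_at (X k) b) = y (q + 3) (msg_at (X i) (- w))"
    using e_vector_last_msg_at_surj[OF k(1,2)] by blast
  have "msg_at (X k) b (X i) =
      U i *v y i (msg_at (X k) b) + V i *v y (q + 3) (msg_at (X k) b)"
    by (rule decode_R[OF i]) (use k in \<open>auto simp: msg_at_def\<close>)
  then have "U i *v y i (msg_at (X k) b) = w"
    using k b V_e_vector_msg_at_own[OF i] by (simp add: msg_at_def)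
  then show "\<exists>v. w = U i *v v" by metis
qed

lemma e_vector_determined:
  assumes i: "2 \<le> i" "i \<le> q + 2"
    and S_silent: "i = 2 \<or> i = 3 \<Longrightarrow> x S = 0 \<and> x' S = 0"
    and X1_silent: "i = q + 2 \<Longrightarrow> x (X 1) = 0 \<and> x' (X 1) = 0"
    and same: "x (X i) = x' (X i)" "y (q + 3) x = y (q + 3) x'"
  shows "y i x = y i x'"
proof -
  have "x (X i) = U i *v y i x + V i *v y (q + 3) x"
    by (rule decode_R[OF i]) (use S_silent X1_silent in blast)+
  moreover have "x' (X i) = U i *v y i x' + V i *v y (q + 3) x'"
    by (rule decode_R[OF i]) (use S_silent X1_silent in blast)+
  ultimately have "U i *v y i x = U i *v y i x'"
    using same by simp
  then show ?thesis by (rule injD[OF inj_U[OF i]])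
qed

end

locale char_q_s_solution_q_nonzero = char_q_s_solution q K A B
  for q :: nat
    and K :: "edge \<Rightarrow> 'a::field^'n^'n"
    and A :: "edge \<Rightarrow> edge \<Rightarrow> 'a^'n^'n"
    and B :: "node \<Rightarrow> node \<Rightarrow> edge \<Rightarrow> 'a^'n^'n" +
  assumes q_nonzero: "of_nat q \<noteq> (0::'a)"
begin

lemma sum_W_e_vector_msg_at_X:
  assumes "2 \<le> k"
  shows "(\<Sum>i = 2..q + 2. W i *v y i (msg_at (X k) c)) = 0"
proof -
  have "y 1 (msg_at (X k) c) = 0"
    by (rule e_vector_eq_0) (use assms non_edges(2) in \<open>auto simp: msg_at_def\<close>)
  then show ?thesis using decode_R_last[of "msg_at (X k) c"] assms by (simp add: msg_at_def)
qed

lemma W_e_vector_msg_at_X_eq_0: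
  assumes i: "2 \<le> i" "i \<le> q + 2" and j: "2 \<le> j" "j \<le> q + 2" "i \<noteq> j"
  shows "W i *v y i (msg_at (X j) b) = 0"
proof -
  define I where "I = {2..q + 2}"
  define w where "w = y (q + 3) (msg_at (X j) b)"
  have "\<forall>k\<in>I. \<exists>c. y (q + 3) (msg_at (X k) c) = w"
    using e_vector_last_msg_at_surj unfolding I_def by auto
  from bchoice[OF this] obtain c0 where c0: "\<forall>k\<in>I. y (q + 3) (msg_at (X k) (c0 k)) = w" ..
  define c where "c = c0(j := b)"
  have c: "y (q + 3) (msg_at (X k) (c k)) = w" if "k \<in> I" for k
    using that c0 unfolding c_def w_def by simp
  define G where "G i' k = W i' *v y i' (msg_at (X k) (c k))" for i' k
  have "G i j = 0"
  proof (rule eq_0_if_rows_const_off_diag_and_col_sums_eq_0[where I = I and q = q])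
    show "G k k = 0" if "k \<in> I" for k
      using that e_vector_msg_at_own[of k "c k"] unfolding G_def I_def by simp
    show "G i' k = G i' l" if "i' \<in> I" "k \<in> I" "l \<in> I" "k \<noteq> i'" "l \<noteq> i'" for i' k l
    proof -
      have "y i' (msg_at (X k) (c k)) = y i' (msg_at (X l) (c l))"
      proof (rule e_vector_determined)
        show "y (q + 3) (msg_at (X k) (c k)) = y (q + 3) (msg_at (X l) (c l))"
          using c that(2,3) by simp
      qed (use that in \<open>auto simp: I_def msg_at_def\<close>)
      then show ?thesis unfolding G_def by simp
    qed
    show "(\<Sum>i'\<in>I. G i' k) = 0" if "k \<in> I" for k
      using that sum_W_e_vector_msg_at_X[of k "c k"] unfolding G_def I_def by simp
  qed (use i j q_nonzero in \<open>simp_all add: I_def\<close>)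
  then show ?thesis by (simp add: G_def c_def)
qed

text \<open>Restricting \<open>x\<close> to the sources feeding \<open>m\<^sub>i\<close> silences \<open>s\<close> for \<open>i \<in> {2, 3}\<close> and
  \<open>x\<^sub>1\<close> for \<open>i = q + 2\<close> without changing \<open>y\<^sub>i\<close>, so no condition on \<open>x\<close> is needed.\<close>

lemma W_e_vector_eq_0:
  assumes i: "2 \<le> i" "i \<le> q + 2"
  shows "W i *v y i x = 0"
proof -
  define x' where "x' a = (if (a, M i) \<in> edges q then x a else 0)" for a
  have restrict: "y i x = y i x'" by (rule e_vector_cong) (simp add: x'_def)
  obtain k where k: "2 \<le> k" "k \<le> q + 2" "k \<noteq> i" by (rule obtain_other_index)
  obtain c where c: "y (q + 3) (msg_at (X k) c) = y (q + 3) x'"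
    using e_vector_last_msg_at_surj[OF k(1,2)] by blast
  have "y i x' = y i (msg_at (X k) c)"
  proof (rule e_vector_determined[OF i])
    show "x' S = 0 \<and> msg_at (X k) c S = 0" if "i = 2 \<or> i = 3"
      using that non_edges(3,4) by (auto simp: x'_def msg_at_def)
    show "x' (X 1) = 0 \<and> msg_at (X k) c (X 1) = 0" if "i = q + 2"
      using that k non_edges(5) by (auto simp: x'_def msg_at_def)
    show "x' (X i) = msg_at (X k) c (X i)"
      using i k non_edges(1) by (simp add: x'_def msg_at_def)
  qed (use c in simp)
  then show ?thesis using restrict W_e_vector_msg_at_X_eq_0[OF i k(1,2)] k(3) by simp
qed

lemma decode_X1_from_e1: "x (X 1) = W 1 *v y 1 x"
proof -
  have "(\<Sum>i = 2..q + 2. W i *v y i x) = 0"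
    by (rule sum.neutral) (simp add: W_e_vector_eq_0)
  then show ?thesis using decode_R_last[of x] by simp
qed

lemma s_coeff_e1_eq_0: "s_coeff_e1 K A = 0"
proof -
  have "W 1 *v y 1 (msg_at (X 1) b) = b" for b
    using decode_X1_from_e1[of "msg_at (X 1) b"] msg_at_def[of "X 1" b] by metis
  then have inj_W1: "inj ((*v) (W 1))"
    by (intro matrix_surj_imp_inj surjI[of _ "\<lambda>b. y 1 (msg_at (X 1) b)"])
  have y1_S: "y 1 (msg_at S a) = s_coeff_e1 K A *v a" for a
    unfolding M_out_def in_edges_M1 s_coeff_e1_def by (simp add: msg_at_def matrix_vector_mul_assoc)
  have "W 1 *v y 1 (msg_at S a) = W 1 *v 0" for a
    using decode_X1_from_e1[of "msg_at S a"] by (simp add: msg_at_def)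
  then have "s_coeff_e1 K A *v a = 0" for a using inj_W1 y1_S by (metis injD)
  then show ?thesis by (simp add: matrix_eq)
qed

end

theorem lemma2:
  fixes q p :: nat
    and K :: "edge \<Rightarrow> 'a::{finite,field}^'n::finite^'n"
    and A :: "edge \<Rightarrow> edge \<Rightarrow> 'a^'n^'n"
    and B :: "node \<Rightarrow> node \<Rightarrow> edge \<Rightarrow> 'a^'n^'n"
  assumes "q \<ge> 2"
    and "prime p"
    and "\<not> p dvd q"
    and "CHAR('a) = p"
    and "is_VLNC_solution q K A B"
  shows "s_coeff_e1 K A = 0"
proof -
  have "of_nat q \<noteq> (0::'a)" using assms(3,4) by (simp add: of_nat_eq_0_iff_char_dvd)
  then interpret char_q_s_solution_q_nonzero q K A B
    using assms(1,5) by unfold_locales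
  show ?thesis by (rule s_coeff_e1_eq_0)
qed

end
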